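(* Let $S$ be a finite set of points in the plane whose convex hull is the triangle $ABC$ with $A,B,C\in S$, and suppose $S$ contains at least one point other than $A,B,C$. Let $A_1$ be a point of $S\setminus\{A,B,C\}$ at maximum distance from the line $BC$ among the points of $S\setminus\{A,B,C\}$. Then the segment $AA_1$ is an edge of every triangulation of $S$.
   Context: A triangulation of a finite planar point set $S$ is a maximal set of straight line segments whose endpoints are in $S$, which contain no point of $S$ other than their endpoints, and any two of which meet at most in a common endpoint. *)

theory Defs
  imports "HOL-Analysis.Analysis"
begin

definition seg_of :: "(real^2) set \<Rightarrow> (real^2) set \<Rightarrow> bool" where
  "seg_of S s \<longleftrightarrow> (\<exists>p\<in>S. \<exists>q\<in>S. p \<noteq> q \<and> s = closed_segment p q \<and> s \<inter> S = {p, q})"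

definition seg_family :: "(real^2) set \<Rightarrow> (real^2) set set \<Rightarrow> bool" where
  "seg_family S T \<longleftrightarrow>
     (\<forall>s\<in>T. seg_of S s) \<and>
     (\<forall>s\<in>T. \<forall>t\<in>T. s \<noteq> t \<longrightarrow>
        s \<inter> t = {} \<or> (\<exists>x. s \<inter> t = {x} \<and> x \<in> S))"

definition triangulation :: "(real^2) set \<Rightarrow> (real^2) set set \<Rightarrow> bool" where
  "triangulation S T \<longleftrightarrow> seg_family S T \<and>
     (\<forall>T'. T \<subseteq> T' \<and> seg_family S T' \<longrightarrow> T' = T)"

end

theory Submission
  imports Defs
begin

text \<open>On the triangle ABC the distance to the line BC is an affine function (the barycentric
  A-coordinate times the height of A). So A is its unique maximiser on S, and every point of the
  segment AA1 other than A1 lies strictly above all of S - {A}: no point of S lies inside AA1, and a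
  segment between points of S - {A} can meet AA1 only in A1. A segment from A to another point of S
  meets AA1 only in A, since otherwise one of the two would contain the endpoint of the other.
  Hence AA1 is compatible with every triangulation, and maximality puts it there.\<close>

lemma infdist_homothety_le:
  fixes L :: "'a::real_normed_vector set"
  assumes "affine L" "y \<in> L" "t > 0"
  shows "infdist (y + t *\<^sub>R (x - y)) L \<le> t * infdist x L"
proof -
  have "infdist (y + t *\<^sub>R (x - y)) L / t \<le> dist x z" if "z \<in> L" for z
  proof -
    have "y + t *\<^sub>R (z - y) = (1 - t) *\<^sub>R y + t *\<^sub>R z"
      by (simp add: algebra_simps)
    then have "y + t *\<^sub>R (z - y) \<in> L"
      using mem_affine[OF assms(1,2) that] by simp
    then have "infdist (y + t *\<^sub>R (x - y)) L \<le> dist (y + t *\<^sub>R (x - y)) (y + t *\<^sub>R (z - y))"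
      by (rule infdist_le)
    also have "\<dots> = t * dist x z"
      using assms(3) by (simp add: dist_norm flip: scaleR_diff_right)
    finally show ?thesis
      using assms(3) by (simp add: divide_simps mult.commute)
  qed
  moreover have "L \<noteq> {}"
    using assms(2) by blast
  ultimately have "infdist (y + t *\<^sub>R (x - y)) L / t \<le> infdist x L"
    by (simp add: infdist_notempty cINF_greatest)
  then show ?thesis
    using assms(3) by (simp add: divide_simps mult.commute)
qed

lemma infdist_homothety:
  fixes L :: "'a::real_normed_vector set"
  assumes "affine L" "y \<in> L" "t \<ge> 0"
  shows "infdist (y + t *\<^sub>R (x - y)) L = t * infdist x L"
proof (cases "t = 0")
  case True
  then show ?thesis
    using assms(2) by simp
next
  case False
  with assms(3) have t: "t > 0" by simp
  define x' where "x' = y + t *\<^sub>R (x - y)"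
  have "x = y + (1 / t) *\<^sub>R (x' - y)"
    using t by (simp add: x'_def)
  then have "infdist x L \<le> (1 / t) * infdist x' L"
    using infdist_homothety_le[OF assms(1,2), of "1 / t" x'] t by simp
  moreover have "infdist x' L \<le> t * infdist x L"
    unfolding x'_def by (rule infdist_homothety_le[OF assms(1,2) t])
  ultimately show ?thesis
    using t unfolding x'_def by (simp add: field_simps)
qed

lemma infdist_line_convex_combination:
  fixes A B C :: "'a::real_normed_vector"
  assumes "0 \<le> u" "0 \<le> v" "0 \<le> w" "u + v + w = 1"
  shows "infdist (u *\<^sub>R A + v *\<^sub>R B + w *\<^sub>R C) (affine hull {B, C})
    = u * infdist A (affine hull {B, C})"
proof (cases "v + w = 0")
  case True
  with assms have "u = 1" "v = 0" "w = 0" by auto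
  then show ?thesis by simp
next
  case False
  with assms have vw: "v + w > 0" by simp
  define y where "y = (v / (v + w)) *\<^sub>R B + (w / (v + w)) *\<^sub>R C"
  have "y \<in> affine hull {B, C}"
    unfolding y_def
    by (rule mem_affine) (use vw in \<open>auto simp: hull_inc add_divide_distrib[symmetric]\<close>)
  moreover have "u *\<^sub>R A + v *\<^sub>R B + w *\<^sub>R C = y + u *\<^sub>R (A - y)"
  proof -
    have "y + u *\<^sub>R (A - y) = u *\<^sub>R A + (1 - u) *\<^sub>R y"
      by (simp add: algebra_simps)
    also have "1 - u = v + w"
      using assms(4) by simp
    also have "(v + w) *\<^sub>R y = v *\<^sub>R B + w *\<^sub>R C"
      using vw by (simp add: y_def scaleR_add_right)
    finally show ?thesis by (simp add: add.assoc)
  qed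
  ultimately show ?thesis
    using infdist_homothety[OF affine_affine_hull _ assms(1)] by simp
qed

lemma infdist_line_affine_on_triangle:
  fixes A B C :: "'a::real_normed_vector"
  assumes "p \<in> convex hull {A, B, C}" "q \<in> convex hull {A, B, C}" "0 \<le> t" "t \<le> 1"
  shows "infdist ((1 - t) *\<^sub>R p + t *\<^sub>R q) (affine hull {B, C})
    = (1 - t) * infdist p (affine hull {B, C}) + t * infdist q (affine hull {B, C})"
proof -
  obtain u1 v1 w1 where p: "p = u1 *\<^sub>R A + v1 *\<^sub>R B + w1 *\<^sub>R C"
    "0 \<le> u1" "0 \<le> v1" "0 \<le> w1" "u1 + v1 + w1 = 1"
    using assms(1) unfolding convex_hull_3 by blast
  obtain u2 v2 w2 where q: "q = u2 *\<^sub>R A + v2 *\<^sub>R B + w2 *\<^sub>R C"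
    "0 \<le> u2" "0 \<le> v2" "0 \<le> w2" "u2 + v2 + w2 = 1"
    using assms(2) unfolding convex_hull_3 by blast
  have "(1 - t) *\<^sub>R p + t *\<^sub>R q
      = ((1 - t) * u1 + t * u2) *\<^sub>R A + ((1 - t) * v1 + t * v2) *\<^sub>R B
        + ((1 - t) * w1 + t * w2) *\<^sub>R C"
    unfolding p q by (simp add: algebra_simps)
  moreover have "((1 - t) * u1 + t * u2) + ((1 - t) * v1 + t * v2) + ((1 - t) * w1 + t * w2)
      = (1 - t) * (u1 + v1 + w1) + t * (u2 + v2 + w2)"
    by (simp add: algebra_simps)
  ultimately have "infdist ((1 - t) *\<^sub>R p + t *\<^sub>R q) (affine hull {B, C})
      = ((1 - t) * u1 + t * u2) * infdist A (affine hull {B, C})"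
    using p q assms(3,4) by (simp add: infdist_line_convex_combination)
  moreover have "infdist p (affine hull {B, C}) = u1 * infdist A (affine hull {B, C})"
    using p by (simp add: infdist_line_convex_combination)
  moreover have "infdist q (affine hull {B, C}) = u2 * infdist A (affine hull {B, C})"
    using q by (simp add: infdist_line_convex_combination)
  ultimately show ?thesis
    by (simp add: algebra_simps)
qed

lemma closed_segments_common_start_nested:
  fixes A q r :: "'a::real_vector"
  assumes "z \<in> closed_segment A q" "z \<in> closed_segment A r" "z \<noteq> A"
  shows "q \<in> closed_segment A r \<or> r \<in> closed_segment A q"
proof -
  have shorter: "r \<in> closed_segment A q"
    if "a *\<^sub>R (q - A) = b *\<^sub>R (r - A)" "0 < a" "a \<le> b" for a b q r
  proof -
    have "(a / b) *\<^sub>R (q - A) = (1 / b) *\<^sub>R (a *\<^sub>R (q - A))"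
      by simp
    also have "\<dots> = r - A"
      using that by simp
    finally have "r = (1 - a / b) *\<^sub>R A + (a / b) *\<^sub>R q"
      by (simp add: algebra_simps)
    moreover have "0 \<le> a / b" "a / b \<le> 1"
      using that(2,3) by auto
    ultimately show ?thesis
      unfolding in_segment by blast
  qed
  obtain a where a: "0 \<le> a" "z = A + a *\<^sub>R (q - A)"
    using assms(1) by (auto simp: in_segment algebra_simps)
  obtain b where b: "0 \<le> b" "z = A + b *\<^sub>R (r - A)"
    using assms(2) by (auto simp: in_segment algebra_simps)
  have "0 < a" "0 < b"
    using a b assms(3) by (auto simp: less_le)
  moreover have "a *\<^sub>R (q - A) = b *\<^sub>R (r - A)"
    using a(2) b(2) by simp
  ultimately show ?thesis
    using shorter[of a q b r] shorter[of b r a q] by (cases "a \<le> b") auto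
qed

lemma triangulation_memI:
  assumes tri: "triangulation S T" and s: "seg_of S s"
    and compatible: "\<And>t. t \<in> T \<Longrightarrow> t \<noteq> s \<Longrightarrow> s \<inter> t = {} \<or> (\<exists>x. s \<inter> t = {x} \<and> x \<in> S)"
  shows "s \<in> T"
proof -
  have fam: "seg_family S T"
    using tri unfolding triangulation_def by blast
  have "seg_family S (insert s T)"
    unfolding seg_family_def
  proof (intro conjI ballI impI)
    fix u
    assume "u \<in> insert s T"
    then show "seg_of S u"
      using fam s unfolding seg_family_def by blast
  next
    fix u v
    assume "u \<in> insert s T" "v \<in> insert s T" "u \<noteq> v"
    then consider "u = s" "v \<in> T" | "v = s" "u \<in> T" | "u \<in> T" "v \<in> T"
      by blast
    then show "u \<inter> v = {} \<or> (\<exists>x. u \<inter> v = {x} \<and> x \<in> S)"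
    proof cases
      case 1
      then show ?thesis using compatible \<open>u \<noteq> v\<close> by blast
    next
      case 2
      then show ?thesis using compatible[of u] \<open>u \<noteq> v\<close> by (simp add: Int_commute)
    next
      case 3
      then show ?thesis using fam \<open>u \<noteq> v\<close> unfolding seg_family_def by blast
    qed
  qed
  then show ?thesis
    using tri unfolding triangulation_def by blast
qed

lemma seg_of_from_endpoint:
  assumes "seg_of S s" "A \<in> s" "A \<in> S"
  obtains q where "s = closed_segment A q" "q \<in> S" "s \<inter> S = {A, q}"
proof -
  obtain p q where pq: "p \<in> S" "q \<in> S" "p \<noteq> q" "s = closed_segment p q" "s \<inter> S = {p, q}"
    using assms(1) unfolding seg_of_def by blast
  with assms(2,3) have "A = p \<or> A = q"
    by blast
  then show ?thesis
  proof
    assume "A = p"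
    then show ?thesis using that pq by blast
  next
    assume "A = q"
    then show ?thesis using that[of p] pq by (simp add: closed_segment_commute insert_commute)
  qed
qed

lemma closed_segments_common_start_Int:
  assumes "closed_segment A q \<inter> S = {A, q}" "closed_segment A r \<inter> S = {A, r}"
    and "q \<in> S" "r \<in> S" "q \<noteq> r"
  shows "closed_segment A q \<inter> closed_segment A r = {A}"
proof -
  have "z = A" if "z \<in> closed_segment A q" "z \<in> closed_segment A r" for z
  proof (rule ccontr)
    assume "z \<noteq> A"
    with that have "q \<in> closed_segment A r \<or> r \<in> closed_segment A q"
      by (rule closed_segments_common_start_nested)
    then have "q = A \<or> r = A"
      using assms by blast
    then show False
      using that \<open>z \<noteq> A\<close> by auto
  qed
  then show ?thesis
    by auto
qed

lemma segment_le_if_endpoints_le: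
  fixes f :: "'a::real_vector \<Rightarrow> real"
  assumes "\<And>t. 0 \<le> t \<Longrightarrow> t \<le> 1 \<Longrightarrow> f ((1 - t) *\<^sub>R p + t *\<^sub>R q) = (1 - t) * f p + t * f q"
    and "f p \<le> d" "f q \<le> d" "z \<in> closed_segment p q"
  shows "f z \<le> d"
proof -
  obtain t where t: "0 \<le> t" "t \<le> 1" "z = (1 - t) *\<^sub>R p + t *\<^sub>R q"
    using assms(4) by (auto simp: in_segment)
  have "f z = (1 - t) * f p + t * f q"
    unfolding t(3) using t(1,2) by (rule assms(1))
  also have "\<dots> \<le> (1 - t) * d + t * d"
    using assms(2,3) t(1,2) by (intro add_mono mult_left_mono) auto
  finally show ?thesis
    by (simp add: algebra_simps)
qed

lemma segment_eq_endpoint_if_le: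
  fixes f :: "'a::real_vector \<Rightarrow> real"
  assumes "\<And>t. 0 \<le> t \<Longrightarrow> t \<le> 1 \<Longrightarrow> f ((1 - t) *\<^sub>R p + t *\<^sub>R q) = (1 - t) * f p + t * f q"
    and "f q < f p" "z \<in> closed_segment p q" "f z \<le> f q"
  shows "z = q"
proof -
  obtain t where t: "0 \<le> t" "t \<le> 1" "z = (1 - t) *\<^sub>R p + t *\<^sub>R q"
    using assms(3) by (auto simp: in_segment)
  have "f z = (1 - t) * f p + t * f q"
    unfolding t(3) using t(1,2) by (rule assms(1))
  then have "(1 - t) * (f p - f q) = f z - f q"
    by (simp add: algebra_simps)
  with assms(4) have "(1 - t) * (f p - f q) \<le> 0"
    by simp
  then have "t = 1"
    using assms(2) t(2) by (simp add: mult_le_0_iff)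
  then show ?thesis
    using t(3) by simp
qed

lemma triangulation_contains_segment_to_runner_up:
  fixes f :: "real^2 \<Rightarrow> real"
  assumes tri: "triangulation S T"
    and affine_f: "\<And>p q t. p \<in> S \<Longrightarrow> q \<in> S \<Longrightarrow> 0 \<le> t \<Longrightarrow> t \<le> 1 \<Longrightarrow>
      f ((1 - t) *\<^sub>R p + t *\<^sub>R q) = (1 - t) * f p + t * f q"
    and A: "A \<in> S" and A1: "A1 \<in> S" "f A1 < f A"
    and runner_up: "\<And>x. x \<in> S \<Longrightarrow> x \<noteq> A \<Longrightarrow> f x \<le> f A1"
  shows "closed_segment A A1 \<in> T"
proof (rule triangulation_memI[OF tri])
  have A1_on_AA1: "z = A1" if "z \<in> closed_segment A A1" "f z \<le> f A1" for z
    using segment_eq_endpoint_if_le[OF affine_f[OF A A1(1)] A1(2) that] .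
  have AA1_S: "closed_segment A A1 \<inter> S = {A, A1}"
  proof (intro equalityI subsetI)
    fix z
    assume "z \<in> closed_segment A A1 \<inter> S"
    then show "z \<in> {A, A1}"
      using A1_on_AA1[of z] runner_up[of z] by auto
  qed (use A A1 in auto)
  moreover have "A1 \<noteq> A"
    using A1(2) by blast
  ultimately show "seg_of S (closed_segment A A1)"
    unfolding seg_of_def using A A1(1) by (intro bexI[of _ A] bexI[of _ A1] conjI) auto
  fix s
  assume "s \<in> T" "s \<noteq> closed_segment A A1"
  moreover have "seg_of S s"
    using tri \<open>s \<in> T\<close> unfolding triangulation_def seg_family_def by blast
  ultimately show "closed_segment A A1 \<inter> s = {} \<or> (\<exists>x. closed_segment A A1 \<inter> s = {x} \<and> x \<in> S)"
  proof (cases "A \<in> s")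
    case True
    obtain q where q: "s = closed_segment A q" "q \<in> S" "s \<inter> S = {A, q}"
      using \<open>seg_of S s\<close> True A by (rule seg_of_from_endpoint)
    moreover have "A1 \<noteq> q"
      using q(1) \<open>s \<noteq> closed_segment A A1\<close> by blast
    ultimately have "closed_segment A A1 \<inter> s = {A}"
      using closed_segments_common_start_Int[OF AA1_S _ A1(1)] by simp
    then show ?thesis
      using A by blast
  next
    case False
    obtain p q where pq: "p \<in> S" "q \<in> S" "s = closed_segment p q" "s \<inter> S = {p, q}"
      using \<open>seg_of S s\<close> unfolding seg_of_def by blast
    with False have "p \<noteq> A" "q \<noteq> A"
      by auto
    have "z = A1" if "z \<in> closed_segment A A1" "z \<in> s" for z
    proof (rule A1_on_AA1[OF that(1)])
      show "f z \<le> f A1"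
        using segment_le_if_endpoints_le[OF affine_f[OF pq(1,2)]
            runner_up[OF pq(1) \<open>p \<noteq> A\<close>] runner_up[OF pq(2) \<open>q \<noteq> A\<close>]] that(2) pq(3)
        by blast
    qed
    then have "closed_segment A A1 \<inter> s \<subseteq> {A1}"
      by blast
    then show ?thesis
      using A1(1) by (auto dest: subset_singletonD)
  qed
qed

lemma infdist_line_less_apex:
  fixes A B C :: "'a::euclidean_space"
  assumes "\<not> collinear {A, B, C}" "p \<in> convex hull {A, B, C}" "p \<noteq> A"
  shows "infdist p (affine hull {B, C}) < infdist A (affine hull {B, C})"
proof -
  obtain u v w where p: "p = u *\<^sub>R A + v *\<^sub>R B + w *\<^sub>R C"
    "0 \<le> u" "0 \<le> v" "0 \<le> w" "u + v + w = 1"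
    using assms(2) unfolding convex_hull_3 by blast
  have "u \<noteq> 1"
  proof
    assume "u = 1"
    with p(3-5) have "v = 0" "w = 0"
      by auto
    with \<open>u = 1\<close> p(1) assms(3) show False
      by simp
  qed
  with p have "u < 1"
    by linarith
  have "A \<notin> affine hull {B, C}"
    using assms(1) affine_hull_3_imp_collinear[of A B C] by (auto simp: insert_commute)
  then have "0 < infdist A (affine hull {B, C})"
    by (simp add: infdist_pos_not_in_closed)
  with \<open>u < 1\<close> show ?thesis
    using p by (simp add: infdist_line_convex_combination)
qed

theorem lemma4p2:
  fixes S :: "(real^2) set" and A B C A1 :: "real^2"
  assumes "finite S"
    and "A \<in> S" "B \<in> S" "C \<in> S"
    and "\<not> collinear {A, B, C}"
    and "convex hull S = convex hull {A, B, C}"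
    and "S - {A, B, C} \<noteq> {}"
    and "A1 \<in> S - {A, B, C}"
    and "\<forall>P\<in>S - {A, B, C}. infdist P (affine hull {B, C}) \<le> infdist A1 (affine hull {B, C})"
  shows "\<forall>T. triangulation S T \<longrightarrow> closed_segment A A1 \<in> T"
proof (intro allI impI)
  fix T
  assume tri: "triangulation S T"
  define g where "g x = infdist x (affine hull {B, C})" for x
  have S_triangle: "S \<subseteq> convex hull {A, B, C}"
    using hull_subset[of S convex] assms(6) by simp
  show "closed_segment A A1 \<in> T"
  proof (rule triangulation_contains_segment_to_runner_up[OF tri, of g])
    show "g ((1 - t) *\<^sub>R p + t *\<^sub>R q) = (1 - t) * g p + t * g q"
      if "p \<in> S" "q \<in> S" "0 \<le> t" "t \<le> 1" for p q t
      unfolding g_def using that S_triangle by (intro infdist_line_affine_on_triangle) auto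
    show "g A1 < g A"
      unfolding g_def using assms(5,8) S_triangle by (intro infdist_line_less_apex) auto
    show "g x \<le> g A1" if "x \<in> S" "x \<noteq> A" for x
    proof (cases "x \<in> {B, C}")
      case True
      then show ?thesis
        unfolding g_def by (auto simp: hull_inc infdist_nonneg)
    next
      case False
      then show ?thesis
        using assms(9) that unfolding g_def by blast
    qed
  qed (use assms(2,8) in auto)
qed

end
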